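(* Let $r,s,n$ be positive integers. If $P$ is a valid lattice path from $(0,0)$ to $(nr,ns)$, then $P$ is northwest of the staircase $S$, the path from $(0,0)$ to $(nr,ns)$ with step sequence $(E^rN^s)^n$.
   Context: A lattice path is a path in $\mathbb{Z}^2$ consisting of unit steps north ($N$-steps, adding $(0,1)$) and east ($E$-steps, adding $(1,0)$). For fixed positive integers $r,s$, points $v,w\in\mathbb{Z}^2$ are equivalent if $v-w=\ell(r,s)$ for some $\ell\in\mathbb{Z}$; $[v]$ denotes the class of $v$. A lattice path $P$ is valid if whenever $P$ enters a point $v$ with an $E$-step, every later point of $P$ in $[v]$ is also entered by an $E$-step. A path $P$ is northwest of a path $Q$ if for every vertex $(x,y)$ of $P$ there is a vertex $(x',y')$ of $Q$ with $x\le x'$ and $y\ge y'$. *)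

theory Defs
  imports Main
begin

text \<open>A lattice path starting at (0,0) is represented by its list of unit steps.\<close>
datatype step = E | N

definition step_vec :: "step \<Rightarrow> int \<times> int" where
  "step_vec st = (case st of E \<Rightarrow> (1, 0) | N \<Rightarrow> (0, 1))"

definition vertex :: "step list \<Rightarrow> nat \<Rightarrow> int \<times> int" where
  "vertex P i = (int (length (filter (\<lambda>st. st = E) (take i P))),
                 int (length (filter (\<lambda>st. st = N) (take i P))))"

definition vertices :: "step list \<Rightarrow> (int \<times> int) set" where
  "vertices P = {vertex P i | i. i \<le> length P}"

definition path_to :: "step list \<Rightarrow> int \<Rightarrow> int \<Rightarrow> bool" where
  "path_to P a b \<longleftrightarrow> vertex P (length P) = (a, b)"

definition equiv_rs :: "int \<Rightarrow> int \<Rightarrow> int \<times> int \<Rightarrow> int \<times> int \<Rightarrow> bool" where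
  "equiv_rs r s v w \<longleftrightarrow> (\<exists>l::int. fst v - fst w = l * r \<and> snd v - snd w = l * s)"

text \<open>Vertex i (1 \<le> i \<le> length P) is entered by step P ! (i-1).
  Valid: whenever P enters a point v by an E-step, every later point of P
  equivalent to v is also entered by an E-step.\<close>
definition valid :: "int \<Rightarrow> int \<Rightarrow> step list \<Rightarrow> bool" where
  "valid r s P \<longleftrightarrow>
     (\<forall>i j. 1 \<le> i \<and> i < j \<and> j \<le> length P \<and> P ! (i - 1) = E
        \<and> equiv_rs r s (vertex P j) (vertex P i) \<longrightarrow> P ! (j - 1) = E)"

definition northwest_of :: "step list \<Rightarrow> step list \<Rightarrow> bool" where
  "northwest_of P Q \<longleftrightarrow>
     (\<forall>(x, y) \<in> vertices P. \<exists>(x', y') \<in> vertices Q. x \<le> x' \<and> y \<ge> y')"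

definition staircase :: "nat \<Rightarrow> nat \<Rightarrow> nat \<Rightarrow> step list" where
  "staircase r s n = concat (replicate n (replicate r E @ replicate s N))"

end

theory Submission
  imports Defs
begin

text \<open>Say that the path passes below a point p if every vertex in the column of p lies
  strictly below p. Validity forces: if the path passes below the translate v + m(r,s) of a
  vertex v, it passes below the translates of all later vertices, since otherwise some N-step
  would enter a translate of a point entered by an E-step. Hence the set of k with the path
  passing below k(r,s) is closed under addition modulo n; as the path visits (0,0) and
  (nr,ns), this set is empty. So a vertex (x,y) with kr < x \<le> (k+1)r has y \<ge> ks, i.e. it
  lies northwest of the staircase vertex (x,ks).\<close>

definition xcoord :: "step list \<Rightarrow> nat \<Rightarrow> nat" where
  "xcoord P i = length (filter (\<lambda>st. st = E) (take i P))"

definition ycoord :: "step list \<Rightarrow> nat \<Rightarrow> nat" where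
  "ycoord P i = length (filter (\<lambda>st. st = N) (take i P))"

lemma vertex_eq_coords: "vertex P i = (int (xcoord P i), int (ycoord P i))"
  by (simp add: vertex_def xcoord_def ycoord_def)

lemma length_filter_take_mono:
  "i \<le> j \<Longrightarrow> length (filter f (take i xs)) \<le> length (filter f (take j xs))"
  by (metis append_take_drop_id filter_append le_add1 length_append min.absorb1 take_take)

lemma xcoord_mono: "i \<le> j \<Longrightarrow> xcoord P i \<le> xcoord P j"
  unfolding xcoord_def by (rule length_filter_take_mono)

lemma ycoord_mono: "i \<le> j \<Longrightarrow> ycoord P i \<le> ycoord P j"
  unfolding ycoord_def by (rule length_filter_take_mono)

lemma xcoord_0 [simp]: "xcoord P 0 = 0"
  by (simp add: xcoord_def)

lemma ycoord_0 [simp]: "ycoord P 0 = 0"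
  by (simp add: ycoord_def)

lemma xcoord_Suc:
  "i < length P \<Longrightarrow> xcoord P (Suc i) = xcoord P i + (if P ! i = E then 1 else 0)"
  by (simp add: xcoord_def take_Suc_conv_app_nth)

lemma ycoord_Suc:
  "i < length P \<Longrightarrow> ycoord P (Suc i) = ycoord P i + (if P ! i = N then 1 else 0)"
  by (simp add: ycoord_def take_Suc_conv_app_nth)

lemma step_neq_N_iff: "st \<noteq> N \<longleftrightarrow> st = E"
  by (cases st) auto

lemma xcoord_intermediate:
  assumes "i \<le> j" "j \<le> length P" "xcoord P i \<le> c" "c \<le> xcoord P j"
  obtains l where "i \<le> l" "l \<le> j" "xcoord P l = c"
proof -
  have "\<exists>l. i \<le> l \<and> l \<le> j \<and> int (xcoord P l) = int c"
    by (rule nat_intermed_int_val) (use assms xcoord_Suc in auto)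
  then show ?thesis using that by auto
qed

lemma xcoord_reaches:
  "c \<le> xcoord P (length P) \<Longrightarrow> \<exists>j \<le> length P. xcoord P j = c"
  using xcoord_intermediate[of 0 "length P" P c] by auto

lemma nat_step_crossing:
  fixes f :: "nat \<Rightarrow> nat"
  assumes "i \<le> j" "f i < b" "b \<le> f j"
  shows "\<exists>l. i \<le> l \<and> l < j \<and> f l < b \<and> b \<le> f (Suc l)"
  using assms
proof (induction j rule: dec_induct)
  case base
  then show ?case by simp
next
  case (step j)
  then show ?case by (cases "b \<le> f j") (auto intro: less_SucI)
qed

definition passes_below :: "step list \<Rightarrow> nat \<Rightarrow> nat \<Rightarrow> bool" where
  "passes_below P a b \<longleftrightarrow> (\<forall>j \<le> length P. xcoord P j = a \<longrightarrow> ycoord P j < b)"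

lemma not_passes_below_vertex: "i \<le> length P \<Longrightarrow> \<not> passes_below P (xcoord P i) (ycoord P i)"
  unfolding passes_below_def by auto

lemma passes_below_mono: "passes_below P a b \<Longrightarrow> b \<le> b' \<Longrightarrow> passes_below P a b'"
  unfolding passes_below_def by fastforce

lemma valid_translate_E:
  assumes "valid (int r) (int s) P" "0 < i" "i < j" "j \<le> length P" "P ! (i - 1) = E"
    "xcoord P j = xcoord P i + m * r" "ycoord P j = ycoord P i + m * s"
  shows "P ! (j - 1) = E"
proof -
  have "equiv_rs (int r) (int s) (vertex P j) (vertex P i)"
    unfolding equiv_rs_def vertex_eq_coords using assms(6,7) by (intro exI[of _ "int m"]) simp
  moreover have "1 \<le> i" using assms(2) by simp
  ultimately show ?thesis using assms(1,3-5) unfolding valid_def by blast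
qed

text \<open>If the path passed above the translate of vertex i + 1 after an E-step,
  it would have to cross the row of that translate by an N-step; as the translate of
  vertex i is not on the path, this N-step enters the translate of vertex i + 1,
  contradicting validity.\<close>
lemma passes_below_translate_Suc:
  assumes valid: "valid (int r) (int s) P" and "0 < r" "0 < m" and "i < length P"
    and below: "passes_below P (xcoord P i + m * r) (ycoord P i + m * s)"
  shows "passes_below P (xcoord P (Suc i) + m * r) (ycoord P (Suc i) + m * s)"
proof (cases "P ! i = N")
  case True
  then show ?thesis using below xcoord_Suc[OF \<open>i < length P\<close>] ycoord_Suc[OF \<open>i < length P\<close>]
    by (auto intro: passes_below_mono)
next
  case False
  then have step_E: "P ! i = E" by (simp add: step_neq_N_iff)
  define a b where "a = xcoord P i + m * r" and "b = ycoord P i + m * s"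
  have x_Suc: "xcoord P (Suc i) = xcoord P i + 1" and y_Suc: "ycoord P (Suc i) = ycoord P i"
    using step_E xcoord_Suc[OF \<open>i < length P\<close>] ycoord_Suc[OF \<open>i < length P\<close>] by auto
  show ?thesis unfolding passes_below_def
  proof (intro allI impI, rule ccontr)
    fix j assume "j \<le> length P" and xj: "xcoord P j = xcoord P (Suc i) + m * r"
      and "\<not> ycoord P j < ycoord P (Suc i) + m * s"
    then have xj: "xcoord P j = a + 1" and yj: "b \<le> ycoord P j"
      using x_Suc y_Suc by (auto simp: a_def b_def)
    obtain j1 where "j1 \<le> j" and xj1: "xcoord P j1 = a"
      using xcoord_intermediate[of 0 j P a] \<open>j \<le> length P\<close> xj by auto
    then have "ycoord P j1 < b"
      using below \<open>j \<le> length P\<close> unfolding passes_below_def a_def b_def by auto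
    then obtain l where l: "j1 \<le> l" "l < j" "ycoord P l < b" "b \<le> ycoord P (Suc l)"
      using nat_step_crossing[of j1 j "ycoord P" b] \<open>j1 \<le> j\<close> yj by blast
    have "l < length P" using l \<open>j \<le> length P\<close> by simp
    have step_N: "P ! l = N" and y_l: "ycoord P (Suc l) = b" and x_l: "xcoord P (Suc l) = xcoord P l"
      using xcoord_Suc[OF \<open>l < length P\<close>] ycoord_Suc[OF \<open>l < length P\<close>] l
      by (auto split: if_splits)
    have "a \<le> xcoord P (Suc l)" "xcoord P (Suc l) \<le> a + 1"
      using xcoord_mono[of j1 l P] xcoord_mono[of "Suc l" j P] l xj xj1 x_l by auto
    moreover have "xcoord P (Suc l) \<noteq> a"
    proof
      assume "xcoord P (Suc l) = a"
      then have "ycoord P (Suc l) < b"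
        using below \<open>l < length P\<close> unfolding passes_below_def a_def b_def by simp
      then show False using y_l by simp
    qed
    ultimately have x_l': "xcoord P (Suc l) = xcoord P (Suc i) + m * r"
      using x_Suc a_def by linarith
    have "Suc i < Suc l"
    proof (rule ccontr)
      assume "\<not> Suc i < Suc l"
      then have "xcoord P (Suc l) \<le> xcoord P (Suc i)" by (simp add: xcoord_mono)
      then show False using x_l' \<open>0 < r\<close> \<open>0 < m\<close> by simp
    qed
    then have "P ! (Suc l - 1) = E"
      using valid_translate_E[OF valid, of "Suc i" "Suc l" m] \<open>l < length P\<close> step_E x_l' y_l y_Suc
      by (simp add: b_def)
    then show False using step_N by simp
  qed
qed

lemma passes_below_translate:
  assumes "valid (int r) (int s) P" "0 < r" "0 < m" "i \<le> i'" "i' \<le> length P"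
    and "passes_below P (xcoord P i + m * r) (ycoord P i + m * s)"
  shows "passes_below P (xcoord P i' + m * r) (ycoord P i' + m * s)"
  using assms(4-6)
proof (induction i' rule: dec_induct)
  case base
  then show ?case by simp
next
  case (step i')
  then show ?case using passes_below_translate_Suc[OF assms(1-3)] by simp
qed

lemma passes_below_multiple_add:
  assumes valid: "valid (int r) (int s) P" and "0 < r" "0 < b"
    and "a * r \<le> xcoord P (length P)"
    and below_a: "passes_below P (a * r) (a * s)" and below_b: "passes_below P (b * r) (b * s)"
  shows "passes_below P ((a + b) * r) ((a + b) * s)"
proof -
  obtain j where "j \<le> length P" and xj: "xcoord P j = a * r"
    using xcoord_reaches assms(4) by blast
  then have yj: "ycoord P j < a * s"
    using below_a unfolding passes_below_def by simp
  have "passes_below P (xcoord P 0 + b * r) (ycoord P 0 + b * s)"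
    using below_b by simp
  then have "passes_below P (xcoord P j + b * r) (ycoord P j + b * s)"
    using passes_below_translate[OF valid \<open>0 < r\<close> \<open>0 < b\<close>] \<open>j \<le> length P\<close> by blast
  then show ?thesis
    using xj yj by (auto simp: algebra_simps intro: passes_below_mono)
qed

lemma passes_below_multiple_add_sub:
  assumes valid: "valid (int r) (int s) P" and "0 < r"
    and x_end: "xcoord P (length P) = n * r" and y_end: "ycoord P (length P) = n * s"
    and "a < n" "b < n" "n \<le> a + b"
    and below_a: "passes_below P (a * r) (a * s)" and below_b: "passes_below P (b * r) (b * s)"
  shows "passes_below P ((a + b - n) * r) ((a + b - n) * s)"
proof (rule ccontr)
  define c m where "c = a + b - n" and "m = n - b"
  assume "\<not> passes_below P (c * r) (c * s)"
  then obtain j where "j \<le> length P" and xj: "xcoord P j = c * r" and yj: "c * s \<le> ycoord P j"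
    unfolding passes_below_def by auto
  have "c + m = a" "0 < m" using assms(5-7) by (auto simp: c_def m_def)
  then have "xcoord P j + m * r = a * r" "a * s \<le> ycoord P j + m * s"
    using xj yj by (auto simp: algebra_simps)
  then have "passes_below P (xcoord P j + m * r) (ycoord P j + m * s)"
    using below_a passes_below_mono by simp
  moreover obtain k where "k \<le> length P" and xk: "xcoord P k = b * r"
    using xcoord_reaches x_end \<open>b < n\<close> by (metis less_imp_le_nat mult_le_mono1)
  moreover have "j \<le> k"
  proof (rule ccontr)
    assume "\<not> j \<le> k"
    then have "xcoord P k \<le> xcoord P j" by (simp add: xcoord_mono)
    moreover have "c < b" using \<open>a < n\<close> \<open>n \<le> a + b\<close> by (simp add: c_def)
    ultimately show False using xj xk \<open>0 < r\<close> by simp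
  qed
  ultimately have "passes_below P (xcoord P k + m * r) (ycoord P k + m * s)"
    using passes_below_translate[OF valid \<open>0 < r\<close> \<open>0 < m\<close>] by blast
  moreover have "xcoord P k + m * r = xcoord P (length P)" "ycoord P k < b * s"
    using x_end xk below_b \<open>k \<le> length P\<close> \<open>b < n\<close>
    by (auto simp: m_def passes_below_def simp flip: add_mult_distrib)
  ultimately have "n * s < b * s + m * s"
    using y_end by (auto simp: passes_below_def)
  then show False using \<open>b < n\<close> by (simp add: m_def flip: add_mult_distrib)
qed

lemma passes_below_multiple_add_mod:
  assumes valid: "valid (int r) (int s) P" and "0 < r"
    and x_end: "xcoord P (length P) = n * r" and y_end: "ycoord P (length P) = n * s"
    and "a < n" "0 < b" "b < n"
    and "passes_below P (a * r) (a * s)" "passes_below P (b * r) (b * s)"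
  shows "passes_below P ((a + b) mod n * r) ((a + b) mod n * s)"
proof (cases "a + b < n")
  case True
  then show ?thesis
    using passes_below_multiple_add[OF valid \<open>0 < r\<close> \<open>0 < b\<close>] assms(3,5,8,9) by simp
next
  case False
  then have "(a + b) mod n = a + b - n"
    using \<open>a < n\<close> \<open>b < n\<close> by (simp add: le_mod_geq)
  then show ?thesis
    using passes_below_multiple_add_sub[OF valid \<open>0 < r\<close> x_end y_end] False assms(5,7-9) by simp
qed

lemma not_passes_below_multiple:
  assumes valid: "valid (int r) (int s) P" and "0 < r"
    and x_end: "xcoord P (length P) = n * r" and y_end: "ycoord P (length P) = n * s"
    and "k \<le> n"
  shows "\<not> passes_below P (k * r) (k * s)"
proof
  assume below_k: "passes_below P (k * r) (k * s)"
  have "k \<noteq> 0"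
    using below_k not_passes_below_vertex[of 0 P] by (cases "k = 0") auto
  moreover have "k \<noteq> n"
    using below_k not_passes_below_vertex[of "length P" P] x_end y_end by auto
  ultimately have "0 < k" "k < n" using \<open>k \<le> n\<close> by auto
  have below_multiple: "passes_below P (Suc j * k mod n * r) (Suc j * k mod n * s)" for j
  proof (induction j)
    case 0
    then show ?case using below_k \<open>k < n\<close> by simp
  next
    case (Suc j)
    have "Suc (Suc j) * k mod n = (Suc j * k mod n + k) mod n"
      by (metis add.commute mod_add_right_eq mult_Suc)
    then show ?case
      using passes_below_multiple_add_mod[OF valid \<open>0 < r\<close> x_end y_end _ \<open>0 < k\<close> \<open>k < n\<close>
          Suc below_k] \<open>k < n\<close> by simp
  qed
  have "Suc (n - 1) * k mod n = 0"
    using \<open>k < n\<close> by simp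
  then have "passes_below P (xcoord P 0) (ycoord P 0)"
    using below_multiple[of "n - 1"] by simp
  then show False
    using not_passes_below_vertex by blast
qed

lemma valid_path_above_staircase:
  assumes valid: "valid (int r) (int s) P" and "0 < r"
    and x_end: "xcoord P (length P) = n * r" and y_end: "ycoord P (length P) = n * s"
    and "i \<le> length P" "k * r < xcoord P i"
  shows "k * s \<le> ycoord P i"
proof (rule ccontr)
  assume "\<not> k * s \<le> ycoord P i"
  have "passes_below P (k * r) (k * s)"
    unfolding passes_below_def
  proof (intro allI impI)
    fix j assume "j \<le> length P" "xcoord P j = k * r"
    then have "j \<le> i"
      using xcoord_mono[of i j P] \<open>k * r < xcoord P i\<close> by (cases "j \<le> i") auto
    then show "ycoord P j < k * s"
      using ycoord_mono[of j i P] \<open>\<not> k * s \<le> ycoord P i\<close> by simp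
  qed
  moreover have "k \<le> n"
    using xcoord_mono[OF \<open>i \<le> length P\<close>, of P] \<open>k * r < xcoord P i\<close> x_end
    by (metis less_le_trans mult_le_cancel2 nat_le_linear not_less)
  ultimately show False
    using not_passes_below_multiple[OF valid \<open>0 < r\<close> x_end y_end] by blast
qed

lemma length_concat_replicate:
  "length (concat (replicate k B)) = k * length B"
  "length (filter f (concat (replicate k B))) = k * length (filter f B)"
  by (induction k) auto

lemma staircase_vertex:
  assumes "k < n" "a \<le> r"
  shows "(int (k * r + a), int (k * s)) \<in> vertices (staircase r s n)"
proof -
  define B where "B = replicate r E @ replicate s N"
  have "replicate n B = replicate k B @ B # replicate (n - Suc k) B"
    using assms(1) by (metis Suc_diff_Suc add_diff_inverse_nat not_less_iff_gr_or_eq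
        order.asym replicate_Suc replicate_add)
  then have S: "staircase r s n = concat (replicate k B) @ B @ concat (replicate (n - Suc k) B)"
    unfolding staircase_def B_def[symmetric] by simp
  have "take (k * (r + s) + a) (staircase r s n) = concat (replicate k B) @ replicate a E"
    unfolding S using assms(2) by (simp add: B_def length_concat_replicate)
  then have "vertex (staircase r s n) (k * (r + s) + a) = (int (k * r + a), int (k * s))"
    unfolding vertex_def by (simp add: B_def length_concat_replicate filter_replicate)
  moreover have "k * (r + s) + a \<le> length (staircase r s n)"
  proof -
    have "k * (r + s) + a \<le> Suc k * (r + s)" using assms(2) by simp
    also have "\<dots> \<le> n * (r + s)" using assms(1) by (intro mult_le_mono1) simp
    finally show ?thesis
      unfolding staircase_def by (simp add: length_concat_replicate)
  qed
  ultimately show ?thesis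
    unfolding vertices_def by (metis (mono_tags, lifting) mem_Collect_eq)
qed

lemma nat_block_decomposition:
  fixes x r n :: nat
  assumes "0 < r" "0 < n" "x \<le> n * r"
  obtains k a where "k < n" "a \<le> r" "x = k * r + a" "k = 0 \<or> k * r < x"
proof (cases "x = 0")
  case True
  then show ?thesis using that \<open>0 < n\<close> by auto
next
  case False
  define k where "k = (x - 1) div r"
  have "x - 1 = k * r + (x - 1) mod r" "(x - 1) mod r < r"
    using \<open>0 < r\<close> by (simp_all add: k_def)
  then have "k * r < x" "x \<le> k * r + r"
    using False by linarith+
  moreover have "k < n"
    using \<open>k * r < x\<close> \<open>x \<le> n * r\<close> by (metis le_less_trans mult_less_cancel2 not_less)
  ultimately show ?thesis
    using that[of k "x - k * r"] by simp
qed

theorem mainTheorem4: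
  fixes r s n :: nat and P :: "step list"
  assumes "r > 0" and "s > 0" and "n > 0"
    and "path_to P (int (n * r)) (int (n * s))"
    and "valid (int r) (int s) P"
  shows "northwest_of P (staircase r s n)"
  unfolding northwest_of_def
proof (intro ballI)
  fix v assume "v \<in> vertices P"
  then obtain i where "i \<le> length P" and v: "v = (int (xcoord P i), int (ycoord P i))"
    unfolding vertices_def vertex_eq_coords by auto
  have x_end: "xcoord P (length P) = n * r" and y_end: "ycoord P (length P) = n * s"
    using assms(4) unfolding path_to_def vertex_eq_coords by (metis of_nat_eq_iff prod.inject)+
  obtain k a where "k < n" "a \<le> r" and x: "xcoord P i = k * r + a"
    and "k = 0 \<or> k * r < xcoord P i"
    using nat_block_decomposition[OF \<open>r > 0\<close> \<open>n > 0\<close>] xcoord_mono[OF \<open>i \<le> length P\<close>] x_end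
    by metis
  then have "k * s \<le> ycoord P i"
    using valid_path_above_staircase[OF assms(5,1) x_end y_end \<open>i \<le> length P\<close>] by auto
  moreover have "(int (k * r + a), int (k * s)) \<in> vertices (staircase r s n)"
    using staircase_vertex[OF \<open>k < n\<close> \<open>a \<le> r\<close>] .
  ultimately show "case v of (x, y) \<Rightarrow> \<exists>(x', y') \<in> vertices (staircase r s n). x \<le> x' \<and> y \<ge> y'"
    unfolding v x prod.case
    by (intro bexI[of _ "(int (k * r + a), int (k * s))"]) (simp_all del: of_nat_mult of_nat_add)
qed

end
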